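(* If $v_0=v^*$, then $$\eta\sum_{i=1}^n\langle\phi(x_i),P\widehat v_{i-1}\rangle^2\le 100\cdot\alpha^2\cdot\log^2 n\cdot\log\|v_n\|_2.$$
   Context: Setting: $\phi(x_1),\dots,\phi(x_n)\in\mathbb{R}^d$ are feature vectors of samples $x_1,\dots,x_n$; $\eta\in(0,0.1)$; $\beta\ge\alpha>0$; $v^*\in\mathbb{R}^d$ satisfies $\|v^*\|_2=1$, $\eta\sum_{i=1}^n\langle v^*,\phi(x_i)\rangle^2=\beta$, and $\eta\sum_{i=1}^n\langle w,\phi(x_i)\rangle^2\le\alpha$ for every $w$ with $\|w\|_2\le1$ and $\langle w,v^*\rangle=0$. $P=I-v^*(v^* )^\top$. The iterates are $v_i=v_{i-1}+\eta\langle\phi(x_i),v_{i-1}\rangle\phi(x_i)$ for $i\in[n]$, and $\widehat v_i=v_i/\|v_i\|_2$. *)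

theory Defs
  imports "HOL-Analysis.Analysis"
begin

text \<open>Oja-type iterates: v_0 given, v_i = v_{i-1} + eta <phi(x_i), v_{i-1}> phi(x_i).
  Feature vectors phi(x_i) are given as phi i for i = 1..n.\<close>
fun oja_iter :: "real \<Rightarrow> (nat \<Rightarrow> 'a::real_inner) \<Rightarrow> 'a \<Rightarrow> nat \<Rightarrow> 'a" where
  "oja_iter eta phi v0 0 = v0"
| "oja_iter eta phi v0 (Suc i) =
     oja_iter eta phi v0 i + (eta * (phi (Suc i) \<bullet> oja_iter eta phi v0 i)) *\<^sub>R phi (Suc i)"

definition perp_proj :: "'a::real_inner \<Rightarrow> 'a \<Rightarrow> 'a" where
  "perp_proj vs x = x - (vs \<bullet> x) *\<^sub>R vs"

end

theory Submission
  imports Defs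
begin

(* Since v_0 = v*, the perpendicular part P v_(i-1) is the sum of the increments eta c_j P phi_j
  over j < i, where c_j = <phi_j, v_(j-1)>.  For i <= n < 2^L, every j < i is assigned the unique
  dyadic level l < L at which j and i fall into the two halves of one dyadic block.  Fix a level
  and a pair of sibling blocks A < B.  The increments from A form a vector y orthogonal to v*, so
  the spectral gap gives eta * sum_(i in B) <phi_i, y>^2 <= alpha |y|^2 and, dually,
  |y|^2 <= alpha * sum_(j in A) eta c_j^2.  As |v_k| is nondecreasing and
  |v_j|^2 >= |v_(j-1)|^2 + 2 eta c_j^2, the last sum divided by |v|^2 is at most the growth of
  ln |v| over A.  Hence each level contributes at most alpha^2 ln |v_n|, and Cauchy-Schwarz over
  the L <= 4 ln n levels yields the factor L^2. *)

lemma perp_proj_add: "perp_proj vs (x + y) = perp_proj vs x + perp_proj vs y"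
  by (simp add: perp_proj_def inner_add_right scaleR_add_left)

lemma perp_proj_scaleR: "perp_proj vs (c *\<^sub>R x) = c *\<^sub>R perp_proj vs x"
  by (simp add: perp_proj_def algebra_simps)

lemma perp_proj_self: "norm vs = 1 \<Longrightarrow> perp_proj vs vs = 0"
  by (simp add: perp_proj_def dot_square_norm)

lemma perp_proj_orthogonal: "norm vs = 1 \<Longrightarrow> perp_proj vs x \<bullet> vs = 0"
  by (simp add: perp_proj_def inner_diff_left inner_commute[of x] power2_norm_eq_inner[symmetric])

lemma inner_perp_proj: "w \<bullet> vs = 0 \<Longrightarrow> w \<bullet> perp_proj vs x = w \<bullet> x"
  by (simp add: perp_proj_def inner_diff_right)

(* The level-l dyadic blocks of j and i are the left and right halves of one block of length
  2^(l+1). *)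
definition dyadic_sibling :: "nat \<Rightarrow> nat \<Rightarrow> nat \<Rightarrow> bool" where
  "dyadic_sibling l j i \<longleftrightarrow> i div 2^l = j div 2^l + 1 \<and> even (j div 2^l)"

lemma div_power2_Suc:
  fixes x :: nat
  shows "x div 2 ^ Suc l = x div 2 ^ l div 2" and "x div 2 ^ Suc l = x div 2 div 2 ^ l"
  by (metis div_mult2_eq power_Suc2) (metis div_mult2_eq power_Suc)

lemma div_power2_eq_mono:
  fixes i j :: nat
  assumes "i div 2^m = j div 2^m" "m \<le> m'"
  shows "i div 2^m' = j div 2^m'"
proof -
  have "2 ^ m' = (2::nat) ^ m * 2 ^ (m' - m)"
    using assms(2) by (simp flip: power_add)
  with assms(1) show ?thesis by (simp add: div_mult2_eq)
qed

lemma dyadic_sibling_less: "dyadic_sibling l j i \<Longrightarrow> j < i"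
  unfolding dyadic_sibling_def by (metis div_le_mono less_add_one not_le)

lemma dyadic_sibling_agree_iff:
  assumes "dyadic_sibling l j i"
  shows "i div 2^m = j div 2^m \<longleftrightarrow> l < m"
proof
  assume agree: "i div 2^m = j div 2^m"
  show "l < m"
  proof (rule ccontr)
    assume "\<not> l < m"
    then have "i div 2^l = j div 2^l" using div_power2_eq_mono[OF agree] by simp
    with assms show False by (simp add: dyadic_sibling_def)
  qed
next
  assume "l < m"
  moreover have "i div 2 ^ Suc l = j div 2 ^ Suc l"
    using assms unfolding div_power2_Suc(1) dyadic_sibling_def by auto
  ultimately show "i div 2^m = j div 2^m" using div_power2_eq_mono[of i "Suc l" j m] by simp
qed

lemma dyadic_sibling_unique:
  assumes "dyadic_sibling l j i" "dyadic_sibling l' j i"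
  shows "l = l'"
proof -
  have "l < Suc l'"
    using dyadic_sibling_agree_iff[OF assms(1), of "Suc l'"] dyadic_sibling_agree_iff[OF assms(2), of "Suc l'"]
    by blast
  moreover have "l' < Suc l"
    using dyadic_sibling_agree_iff[OF assms(1), of "Suc l"] dyadic_sibling_agree_iff[OF assms(2), of "Suc l"]
    by blast
  ultimately show ?thesis by linarith
qed

lemma dyadic_sibling_exists: "j < i \<Longrightarrow> i < 2^L \<Longrightarrow> \<exists>l<L. dyadic_sibling l j i"
proof (induction L arbitrary: i j)
  case 0
  then show ?case by simp
next
  case (Suc L)
  show ?case
  proof (cases "i div 2 = j div 2")
    case True
    with Suc.prems(1) have "i = j + 1 \<and> even j" by presburger
    then have "dyadic_sibling 0 j i" by (simp add: dyadic_sibling_def)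
    then show ?thesis by blast
  next
    case False
    have "j div 2 < i div 2"
      using False div_le_mono[of j i 2] Suc.prems(1) by simp
    moreover have "i div 2 < 2^L"
      using Suc.prems(2) by (simp add: less_mult_imp_div_less mult.commute)
    ultimately obtain l where "l < L" "dyadic_sibling l (j div 2) (i div 2)"
      using Suc.IH by blast
    then have "dyadic_sibling (Suc l) j i" unfolding dyadic_sibling_def div_power2_Suc(2) by simp
    with \<open>l < L\<close> show ?thesis by blast
  qed
qed

lemma sum_split_dyadic_sibling:
  assumes "J \<subseteq> {..<i}" "i < 2^L"
  shows "sum F J = (\<Sum>l<L. sum F {j\<in>J. dyadic_sibling l j i})"
proof -
  define level where "level j = (THE l. dyadic_sibling l j i)" for j
  have level: "dyadic_sibling l j i \<longleftrightarrow> level j = l" if "j \<in> J" for j l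
  proof -
    from that assms obtain l0 where "dyadic_sibling l0 j i" using dyadic_sibling_exists by blast
    then have "level j = l0" unfolding level_def by (blast intro: the_equality dyadic_sibling_unique)
    with \<open>dyadic_sibling l0 j i\<close> show ?thesis using dyadic_sibling_unique by blast
  qed
  have "level ` J \<subseteq> {..<L}"
    using assms level dyadic_sibling_exists by (force simp: subset_eq)
  moreover have "finite J" using assms(1) finite_subset by blast
  ultimately have "sum F J = (\<Sum>l<L. sum F {j\<in>J. level j = l})"
    by (simp add: sum.group)
  also have "\<dots> = (\<Sum>l<L. sum F {j\<in>J. dyadic_sibling l j i})"
    using level by (intro sum.cong refl arg_cong2[where f = sum]) auto
  finally show ?thesis .
qed

lemma norm_sq_le_of_dual_bound:
  fixes u :: "'i \<Rightarrow> 'a::real_inner"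
  assumes y: "y = (\<Sum>j\<in>A. (t * b j) *\<^sub>R u j)" and "0 \<le> t" "0 \<le> M"
    and dual: "t * (\<Sum>j\<in>A. (y \<bullet> u j)^2) \<le> M * (norm y)^2"
  shows "(norm y)^2 \<le> M * (t * (\<Sum>j\<in>A. (b j)^2))"
proof -
  have "(norm y)^2 = y \<bullet> (\<Sum>j\<in>A. (t * b j) *\<^sub>R u j)"
    by (metis y power2_norm_eq_inner)
  also have "\<dots> = (\<Sum>j\<in>A. (sqrt t * b j) * (sqrt t * (y \<bullet> u j)))"
    using \<open>0 \<le> t\<close> by (simp add: inner_sum_right inner_commute[of y] algebra_simps
        flip: mult.assoc[of "sqrt t" "sqrt t"])
  finally have "((norm y)^2)^2 \<le> (\<Sum>j\<in>A. (sqrt t * b j)^2) * (\<Sum>j\<in>A. (sqrt t * (y \<bullet> u j))^2)"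
    by (simp only: Cauchy_Schwarz_ineq_sum)
  also have "\<dots> = (t * (\<Sum>j\<in>A. (b j)^2)) * (t * (\<Sum>j\<in>A. (y \<bullet> u j)^2))"
    using \<open>0 \<le> t\<close> by (simp add: power_mult_distrib sum_distrib_left)
  also have "\<dots> \<le> (t * (\<Sum>j\<in>A. (b j)^2)) * (M * (norm y)^2)"
    using dual \<open>0 \<le> t\<close> by (simp add: mult_left_mono sum_nonneg)
  finally have sq: "(norm y)^2 * (norm y)^2 \<le> (norm y)^2 * (M * (t * (\<Sum>j\<in>A. (b j)^2)))"
    by (simp add: power2_eq_square[of "(norm y)^2"] mult_ac)
  show ?thesis
  proof (cases "y = 0")
    case True
    then show ?thesis using \<open>0 \<le> t\<close> \<open>0 \<le> M\<close> by (simp add: sum_nonneg)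
  next
    case False
    then have "0 < (norm y)^2" by simp
    with sq show ?thesis using mult_le_cancel_left_pos by blast
  qed
qed

lemma ln_ratio_ge:
  fixes a b :: real
  assumes "0 < a" "a \<le> b"
  shows "(b^2 - a^2) / (2 * b^2) \<le> ln (b / a)"
proof -
  have "ln (a^2 / b^2) \<le> a^2 / b^2 - 1"
    using assms by (intro ln_le_minus_one) simp
  moreover have "ln (a^2 / b^2) = - 2 * ln (b / a)"
    using assms by (simp add: ln_div ln_realpow)
  ultimately show ?thesis
    using assms by (simp add: field_simps)
qed

lemma ex_power2_gt_le_ln:
  assumes "2 \<le> n"
  obtains L :: nat where "n < 2^L" "real L \<le> 4 * ln (real n)"
proof -
  obtain m where m: "2^m \<le> n" "n < 2^(m + 1)"
    using ex_power_ivl1[of 2 n] assms by auto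
  have ln2: "1/2 \<le> ln (2::real)"
    using ln_le_minus_one[of "1/2::real"] by (simp add: ln_div)
  have "(2::real)^m \<le> real n"
    using m(1) by (metis of_nat_le_iff of_nat_numeral of_nat_power)
  then have "real m * ln 2 \<le> ln (real n)"
    by (metis ln_le_cancel_iff ln_realpow zero_less_numeral zero_less_power order_less_le_trans)
  moreover have "ln 2 \<le> ln (real n)"
    using assms by simp
  ultimately have "real (m + 1) \<le> 4 * ln (real n)"
    using ln2 mult_left_mono[OF ln2, of "real m"] by simp
  with m(2) show ?thesis using that by blast
qed

locale oja_run =
  fixes eta :: real and phi :: "nat \<Rightarrow> 'a::real_inner" and vs :: 'a
  assumes eta_pos: "0 < eta" and vs_norm: "norm vs = 1"
begin

abbreviation v :: "nat \<Rightarrow> 'a" where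
  "v \<equiv> oja_iter eta phi vs"

abbreviation coef :: "nat \<Rightarrow> real" where
  "coef j \<equiv> phi j \<bullet> v (j - 1)"

abbreviation log_gain :: "nat \<Rightarrow> real" where
  "log_gain j \<equiv> ln (norm (v j)) - ln (norm (v (j - 1)))"

lemma norm_v_Suc_sq:
  "(norm (v (Suc k)))^2
     = (norm (v k))^2 + 2 * eta * (coef (Suc k))^2 + eta^2 * (coef (Suc k))^2 * (norm (phi (Suc k)))^2"
  unfolding oja_iter.simps(2) power2_norm_eq_inner
  by (simp add: inner_add_left inner_add_right inner_commute algebra_simps power2_eq_square)

lemma norm_v_mono: "k \<le> m \<Longrightarrow> norm (v k) \<le> norm (v m)"
proof (rule lift_Suc_mono_le[of "\<lambda>k. norm (v k)"])
  fix k
  have "(norm (v k))^2 \<le> (norm (v (Suc k)))^2"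
    unfolding norm_v_Suc_sq using eta_pos by simp
  then show "norm (v k) \<le> norm (v (Suc k))" by (simp add: power2_le_iff_abs_le)
qed

lemma norm_v_ge_1: "1 \<le> norm (v k)"
  using norm_v_mono[of 0 k] vs_norm by simp

lemma norm_v_pos: "0 < norm (v k)"
  using norm_v_ge_1 less_le_trans zero_less_one by blast

lemma log_gain_nonneg: "0 \<le> log_gain j"
  using norm_v_mono[of "j - 1" j] norm_v_pos[of j] norm_v_pos[of "j - 1"] by simp

lemma log_gain_ge: "eta * (coef (Suc k))^2 / (norm (v (Suc k)))^2 \<le> log_gain (Suc k)"
proof -
  have gain: "2 * (eta * (coef (Suc k))^2) \<le> (norm (v (Suc k)))^2 - (norm (v k))^2"
    unfolding norm_v_Suc_sq by simp
  have "eta * (coef (Suc k))^2 / (norm (v (Suc k)))^2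
      = 2 * (eta * (coef (Suc k))^2) / (2 * (norm (v (Suc k)))^2)"
    by simp
  also have "\<dots> \<le> ((norm (v (Suc k)))^2 - (norm (v k))^2) / (2 * (norm (v (Suc k)))^2)"
    by (rule divide_right_mono[OF gain]) simp
  also have "\<dots> \<le> ln (norm (v (Suc k)) / norm (v k))"
    using norm_v_pos norm_v_mono[of k "Suc k"] by (intro ln_ratio_ge) auto
  also have "\<dots> = log_gain (Suc k)"
    using norm_v_pos[of k] norm_v_pos[of "Suc k"] by (simp add: ln_div)
  finally show ?thesis .
qed

lemma sum_log_gain: "(\<Sum>j=1..m. log_gain j) = ln (norm (v m))"
  by (induction m) (simp_all add: vs_norm)

definition perp_part :: "nat set \<Rightarrow> 'a" where
  "perp_part A = (\<Sum>j\<in>A. (eta * coef j) *\<^sub>R perp_proj vs (phi j))"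

lemma perp_proj_v: "perp_proj vs (v k) = perp_part {1..k}"
proof (induction k)
  case 0
  then show ?case by (simp add: perp_part_def perp_proj_self vs_norm)
next
  case (Suc k)
  then show ?case by (simp add: perp_part_def perp_proj_add perp_proj_scaleR)
qed

lemma perp_part_orthogonal: "perp_part A \<bullet> vs = 0"
  by (simp add: perp_part_def inner_sum_left perp_proj_orthogonal vs_norm)

end

locale oja_gap = oja_run +
  fixes n :: nat and alpha :: real
  assumes gap: "\<And>w. norm w \<le> 1 \<Longrightarrow> w \<bullet> vs = 0 \<Longrightarrow> eta * (\<Sum>i=1..n. (w \<bullet> phi i)^2) \<le> alpha"
begin

lemma alpha_nonneg: "0 \<le> alpha"
  using gap[of 0] by simp

lemma gap_subset:
  assumes "w \<bullet> vs = 0" "B \<subseteq> {1..n}"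
  shows "eta * (\<Sum>i\<in>B. (w \<bullet> phi i)^2) \<le> alpha * (norm w)^2"
proof (cases "w = 0")
  case True
  then show ?thesis by simp
next
  case False
  have "eta * (\<Sum>i\<in>B. (w \<bullet> phi i)^2) \<le> eta * (\<Sum>i=1..n. (w \<bullet> phi i)^2)"
    using assms(2) eta_pos by (intro mult_left_mono sum_mono2) auto
  also have "\<dots> = (eta * (\<Sum>i=1..n. ((w /\<^sub>R norm w) \<bullet> phi i)^2)) * (norm w)^2"
    using False by (simp add: sum_distrib_left sum_distrib_right power_divide field_simps)
  also have "\<dots> \<le> alpha * (norm w)^2"
    using False assms(1) by (intro mult_right_mono gap) auto
  finally show ?thesis .
qed

lemma norm_perp_part_sq:
  assumes "A \<subseteq> {1..n}"
  shows "(norm (perp_part A))^2 \<le> alpha * (eta * (\<Sum>j\<in>A. (coef j)^2))"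
proof (rule norm_sq_le_of_dual_bound)
  show "perp_part A = (\<Sum>j\<in>A. (eta * coef j) *\<^sub>R perp_proj vs (phi j))"
    by (rule perp_part_def)
  have "eta * (\<Sum>j\<in>A. (perp_part A \<bullet> perp_proj vs (phi j))^2) = eta * (\<Sum>j\<in>A. (perp_part A \<bullet> phi j)^2)"
    by (simp add: inner_perp_proj perp_part_orthogonal)
  also have "\<dots> \<le> alpha * (norm (perp_part A))^2"
    by (rule gap_subset[OF perp_part_orthogonal assms])
  finally show "eta * (\<Sum>j\<in>A. (perp_part A \<bullet> perp_proj vs (phi j))^2) \<le> alpha * (norm (perp_part A))^2" .
qed (use eta_pos alpha_nonneg in auto)

lemma perp_part_block_bound:
  assumes A: "A \<subseteq> {1..n}" and B: "B \<subseteq> {1..n}" and before: "\<And>j i. j \<in> A \<Longrightarrow> i \<in> B \<Longrightarrow> j < i"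
  shows "(\<Sum>i\<in>B. eta * (phi i \<bullet> perp_part A)^2 / (norm (v (i - 1)))^2) \<le> alpha^2 * (\<Sum>j\<in>A. log_gain j)"
proof (cases "A = {}")
  case True
  then show ?thesis by (simp add: perp_part_def)
next
  case False
  define e where "e = Max A"
  have "finite A" using A finite_subset by blast
  then have A_le_e: "j \<le> e" if "j \<in> A" for j
    using that by (simp add: e_def)
  have e_less: "e < i" if "i \<in> B" for i
    using before[OF _ that] Max_in[OF \<open>finite A\<close> False] by (simp add: e_def)
  have norm_sq_mono: "(norm (v k))^2 \<le> (norm (v m))^2" if "k \<le> m" for k m
    using norm_v_mono[OF that] by (simp add: power_mono)
  let ?G = "(norm (v e))^2"
  have G_pos: "0 < ?G" using norm_v_pos by simp
  have "(\<Sum>i\<in>B. eta * (phi i \<bullet> perp_part A)^2 / (norm (v (i - 1)))^2)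
      \<le> (\<Sum>i\<in>B. eta * (phi i \<bullet> perp_part A)^2 / ?G)"
  proof (rule sum_mono)
    fix i assume "i \<in> B"
    then have "e \<le> i - 1" using e_less by fastforce
    then have "?G \<le> (norm (v (i - 1)))^2" by (rule norm_sq_mono)
    then show "eta * (phi i \<bullet> perp_part A)^2 / (norm (v (i - 1)))^2 \<le> eta * (phi i \<bullet> perp_part A)^2 / ?G"
      using G_pos eta_pos norm_v_pos[of "i - 1"] by (intro divide_left_mono) auto
  qed
  also have "\<dots> = eta * (\<Sum>i\<in>B. (perp_part A \<bullet> phi i)^2) / ?G"
    by (simp add: inner_commute sum_divide_distrib sum_distrib_left)
  also have "\<dots> \<le> alpha * (norm (perp_part A))^2 / ?G"
    using gap_subset[OF perp_part_orthogonal B] G_pos by (simp add: divide_right_mono)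
  also have "\<dots> \<le> alpha * (alpha * (eta * (\<Sum>j\<in>A. (coef j)^2))) / ?G"
    using norm_perp_part_sq[OF A] alpha_nonneg G_pos by (simp add: divide_right_mono mult_left_mono)
  also have "\<dots> = alpha^2 * (\<Sum>j\<in>A. eta * (coef j)^2 / ?G)"
    by (simp add: power2_eq_square sum_divide_distrib sum_distrib_left mult_ac)
  also have "\<dots> \<le> alpha^2 * (\<Sum>j\<in>A. log_gain j)"
  proof (intro mult_left_mono sum_mono)
    fix j assume "j \<in> A"
    then obtain k where k: "j = Suc k" using A by (cases j) auto
    have "(norm (v j))^2 \<le> ?G" using A_le_e[OF \<open>j \<in> A\<close>] norm_sq_mono by simp
    then have "eta * (coef j)^2 / ?G \<le> eta * (coef j)^2 / (norm (v j))^2"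
      using eta_pos norm_v_pos[of j] G_pos by (intro divide_left_mono) auto
    also have "\<dots> \<le> log_gain j" using log_gain_ge[of k] k by simp
    finally show "eta * (coef j)^2 / ?G \<le> log_gain j" .
  qed simp
  finally show ?thesis .
qed

lemma dyadic_level_bound:
  "(\<Sum>i=1..n. eta * (phi i \<bullet> perp_part {j\<in>{1..<i}. dyadic_sibling l j i})^2 / (norm (v (i - 1)))^2)
     \<le> alpha^2 * ln (norm (v n))"
proof -
  define lower where "lower m = {j\<in>{1..n}. j div 2^l + 1 = m \<and> even (j div 2^l)}" for m
  define H where "H A i = eta * (phi i \<bullet> perp_part A)^2 / (norm (v (i - 1)))^2" for A i
  have sibling_set: "{j\<in>{1..<i}. dyadic_sibling l j i} = lower (i div 2^l)" if "i \<le> n" for i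
  proof -
    have "{j\<in>{1..<i}. dyadic_sibling l j i} = {j\<in>{1..n}. dyadic_sibling l j i}"
      using that dyadic_sibling_less by fastforce
    also have "\<dots> = lower (i div 2^l)"
      unfolding lower_def dyadic_sibling_def by (rule Collect_cong) auto
    finally show ?thesis .
  qed
  \<comment> \<open>Blocks are indexed up to Suc n because j div 2^l + 1 can reach n + 1.\<close>
  have "i div 2^l \<le> n" if "i \<le> n" for i
    using div_le_dividend[of i "2^l"] that by linarith
  then have block_index: "(\<lambda>i. i div 2^l) ` {1..n} \<subseteq> {..Suc n}"
    and sibling_index: "(\<lambda>j. j div 2^l + 1) ` {1..n} \<subseteq> {..Suc n}"
    by fastforce+
  have "(\<Sum>i=1..n. H {j\<in>{1..<i}. dyadic_sibling l j i} i) = (\<Sum>i=1..n. H (lower (i div 2^l)) i)"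
    using sibling_set by (intro sum.cong refl) simp
  also have "\<dots> = (\<Sum>m\<le>Suc n. \<Sum>i\<in>{i\<in>{1..n}. i div 2^l = m}. H (lower (i div 2^l)) i)"
    by (rule sum.group[symmetric]) (use block_index in auto)
  also have "\<dots> = (\<Sum>m\<le>Suc n. \<Sum>i\<in>{i\<in>{1..n}. i div 2^l = m}. H (lower m) i)"
    by (intro sum.cong refl) simp
  also have "\<dots> \<le> (\<Sum>m\<le>Suc n. alpha^2 * sum log_gain (lower m))"
    unfolding H_def
  proof (intro sum_mono perp_part_block_bound)
    fix m j i assume "j \<in> lower m" "i \<in> {i\<in>{1..n}. i div 2^l = m}"
    then have "dyadic_sibling l j i" by (simp add: lower_def dyadic_sibling_def)
    then show "j < i" by (rule dyadic_sibling_less)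
  qed (auto simp: lower_def)
  also have "\<dots> \<le> (\<Sum>m\<le>Suc n. alpha^2 * sum log_gain {j\<in>{1..n}. j div 2^l + 1 = m})"
    using alpha_nonneg log_gain_nonneg
    by (intro sum_mono mult_left_mono sum_mono2) (auto simp: lower_def)
  also have "\<dots> = alpha^2 * (\<Sum>m\<le>Suc n. sum log_gain {j\<in>{1..n}. j div 2^l + 1 = m})"
    by (rule sum_distrib_left[symmetric])
  also have "\<dots> = alpha^2 * (\<Sum>j=1..n. log_gain j)"
    using sibling_index by (subst sum.group) auto
  finally show ?thesis unfolding H_def sum_log_gain .
qed

lemma perp_error_bound:
  assumes "n < 2^L"
  shows "eta * (\<Sum>i=1..n. (phi i \<bullet> perp_proj vs (v (i - 1) /\<^sub>R norm (v (i - 1))))^2)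
    \<le> (real L)^2 * alpha^2 * ln (norm (v n))"
proof -
  define X where "X l i = phi i \<bullet> perp_part {j\<in>{1..<i}. dyadic_sibling l j i}" for l i
  have term_split: "phi i \<bullet> perp_proj vs (v (i - 1) /\<^sub>R norm (v (i - 1))) = (\<Sum>l<L. X l i) / norm (v (i - 1))"
    if "i \<in> {1..n}" for i
  proof -
    have "{1..i - 1} = {1..<i}" by auto
    then have "perp_proj vs (v (i - 1)) = perp_part {1..<i}" by (simp add: perp_proj_v)
    also have "\<dots> = (\<Sum>l<L. perp_part {j\<in>{1..<i}. dyadic_sibling l j i})"
      unfolding perp_part_def using that assms by (intro sum_split_dyadic_sibling) auto
    finally show ?thesis
      by (simp add: X_def perp_proj_scaleR inner_sum_right divide_inverse mult.commute)
  qed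
  have "eta * (\<Sum>i=1..n. (phi i \<bullet> perp_proj vs (v (i - 1) /\<^sub>R norm (v (i - 1))))^2)
      = (\<Sum>i=1..n. eta * (\<Sum>l<L. X l i)^2 / (norm (v (i - 1)))^2)"
    unfolding sum_distrib_left
  proof (intro sum.cong refl)
    fix i assume "i \<in> {1..n}"
    then show "eta * (phi i \<bullet> perp_proj vs (v (i - 1) /\<^sub>R norm (v (i - 1))))^2
        = eta * (\<Sum>l<L. X l i)^2 / (norm (v (i - 1)))^2"
      using term_split[of i] by (simp add: power_divide)
  qed
  also have "\<dots> \<le> (\<Sum>i=1..n. eta * ((\<Sum>l<L. (X l i)^2) * real L) / (norm (v (i - 1)))^2)"
    using eta_pos by (intro sum_mono divide_right_mono mult_left_mono)
      (auto simp: sum_squared_le_sum_of_squares[of _ "{..<L}", simplified])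
  also have "\<dots> = real L * (\<Sum>l<L. \<Sum>i=1..n. eta * (X l i)^2 / (norm (v (i - 1)))^2)"
    by (subst sum.swap) (simp add: sum_distrib_left sum_divide_distrib mult_ac)
  also have "\<dots> \<le> real L * (\<Sum>l<L. alpha^2 * ln (norm (v n)))"
    unfolding X_def by (intro mult_left_mono sum_mono dyadic_level_bound) simp
  also have "\<dots> = (real L)^2 * alpha^2 * ln (norm (v n))"
    by (simp add: power2_eq_square)
  finally show ?thesis .
qed

end

theorem lemmaC5:
  fixes phi :: "nat \<Rightarrow> 'a::euclidean_space" and vs :: 'a
    and n :: nat and eta alpha beta :: real
  assumes eta: "0 < eta" "eta < 0.1"
    and ab: "0 < alpha" "alpha \<le> beta"
    and vs_norm: "norm vs = 1"
    and vs_top: "eta * (\<Sum>i=1..n. (vs \<bullet> phi i)^2) = beta"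
    and perp: "\<And>w. norm w \<le> 1 \<Longrightarrow> w \<bullet> vs = 0 \<Longrightarrow> eta * (\<Sum>i=1..n. (w \<bullet> phi i)^2) \<le> alpha"
  shows "eta * (\<Sum>i=1..n. (phi i \<bullet> perp_proj vs (oja_iter eta phi vs (i - 1) /\<^sub>R norm (oja_iter eta phi vs (i - 1))))^2)
         \<le> 100 * alpha^2 * (ln (real n))^2 * ln (norm (oja_iter eta phi vs n))"
proof -
  interpret oja_gap eta phi vs n alpha
    using eta vs_norm perp by unfold_locales auto
  show ?thesis
  proof (cases "2 \<le> n")
    case True
    then obtain L where L: "n < 2^L" "real L \<le> 4 * ln (real n)"
      by (rule ex_power2_gt_le_ln)
    have "(real L)^2 \<le> (4 * ln (real n))^2"
      using L(2) by (intro power_mono) auto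
    also have "\<dots> \<le> 100 * (ln (real n))^2"
      by (simp add: power_mult_distrib)
    finally have "(real L)^2 \<le> 100 * (ln (real n))^2" .
    have "eta * (\<Sum>i=1..n. (phi i \<bullet> perp_proj vs (v (i - 1) /\<^sub>R norm (v (i - 1))))^2)
        \<le> (real L)^2 * alpha^2 * ln (norm (v n))"
      by (rule perp_error_bound[OF L(1)])
    also have "\<dots> \<le> 100 * (ln (real n))^2 * alpha^2 * ln (norm (v n))"
      using \<open>(real L)^2 \<le> 100 * (ln (real n))^2\<close> norm_v_ge_1[of n] by (intro mult_right_mono) auto
    finally show ?thesis by (simp add: mult_ac)
  next
    case False
    then have "n = 0 \<or> n = 1" by auto
    then show ?thesis using norm_v_ge_1[of n] by (auto simp: perp_proj_self vs_norm)
  qed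
qed

end
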